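(* Let $r\ge 3$ and let $\mathcal H=(V,E)$ be an $r$-uniform bi-hypergraph. Suppose $V$ has a partition $V_1,\dots,V_r$ such that each $V_i$ ($i\in[r]$) is independent in $\mathcal H$, $V_r=\{w\}$ for a single vertex $w$, and for every edge $e\in E$ with $w\in e$ there is some $i\in[r-1]$ with $e\cap V_i=\emptyset$. Then $\mathcal H$ is colorable.
   Context: A bi-hypergraph $\mathcal H=(V,E)$ consists of a finite vertex set $V$ and a set $E$ of subsets of $V$, called edges, with no edge contained in another. It is $r$-uniform if every edge has exactly $r$ elements. A set $S\subseteq V$ is independent if no edge of $\mathcal H$ is contained in $S$. A mapping $f:V\to\mathbb N$ is a proper coloring of $\mathcal H$ if $1<|f(e)|<|e|$ for every $e\in E$, where $f(e)=\{f(v):v\in e\}$. $\mathcal H$ is colorable if it has a proper coloring. $[k]=\{1,\dots,k\}$. *)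

theory Defs
  imports Main
begin

definition bi_hypergraph :: "'a set \<Rightarrow> 'a set set \<Rightarrow> bool" where
  "bi_hypergraph V E \<longleftrightarrow> finite V \<and> (\<forall>e\<in>E. e \<subseteq> V) \<and>
     (\<forall>e\<in>E. \<forall>e'\<in>E. e \<subseteq> e' \<longrightarrow> e = e')"

definition uniform :: "nat \<Rightarrow> 'a set set \<Rightarrow> bool" where
  "uniform r E \<longleftrightarrow> (\<forall>e\<in>E. card e = r)"

definition independent :: "'a set set \<Rightarrow> 'a set \<Rightarrow> bool" where
  "independent E S \<longleftrightarrow> (\<forall>e\<in>E. \<not> e \<subseteq> S)"

definition proper_coloring :: "'a set set \<Rightarrow> ('a \<Rightarrow> nat) \<Rightarrow> bool" where
  "proper_coloring E f \<longleftrightarrow> (\<forall>e\<in>E. 1 < card (f ` e) \<and> card (f ` e) < card e)"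

definition colorable :: "'a set \<Rightarrow> 'a set set \<Rightarrow> bool" where
  "colorable V E \<longleftrightarrow> (\<exists>f :: 'a \<Rightarrow> nat. proper_coloring E f)"

definition is_partition :: "'a set \<Rightarrow> nat \<Rightarrow> (nat \<Rightarrow> 'a set) \<Rightarrow> bool" where
  "is_partition V r P \<longleftrightarrow> (\<forall>i\<in>{1..r}. P i \<noteq> {}) \<and>
     (\<forall>i\<in>{1..r}. \<forall>j\<in>{1..r}. i \<noteq> j \<longrightarrow> P i \<inter> P j = {}) \<and>
     (\<Union>i\<in>{1..r}. P i) = V"

end

theory Submission
  imports Defs
begin

text \<open>Colour every vertex by the index of its part. An edge is not contained in a single part,
  since the parts are independent, so it sees at least two colours. Every edge also misses some
  part: the part \<open>{w}\<close> if it avoids \<open>w\<close>, and some other part by hypothesis otherwise;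
  hence it sees at most \<open>r - 1 < r\<close> colours.\<close>

definition part_index :: "(nat \<Rightarrow> 'a set) \<Rightarrow> nat \<Rightarrow> 'a \<Rightarrow> nat" where
  "part_index P r v = (SOME i. i \<in> {1..r} \<and> v \<in> P i)"

lemma part_index_mem:
  assumes "is_partition V r P" and "v \<in> V"
  shows "part_index P r v \<in> {1..r}" and "v \<in> P (part_index P r v)"
proof -
  from assms obtain i where "i \<in> {1..r} \<and> v \<in> P i"
    unfolding is_partition_def by blast
  then have "part_index P r v \<in> {1..r} \<and> v \<in> P (part_index P r v)"
    unfolding part_index_def by (rule someI)
  then show "part_index P r v \<in> {1..r}" and "v \<in> P (part_index P r v)" by simp_all
qed

lemma one_less_card_part_index_image:
  assumes "is_partition V r P" and "e \<subseteq> V" and "finite e" and "e \<noteq> {}"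
    and not_in_part: "\<forall>i\<in>{1..r}. \<not> e \<subseteq> P i"
  shows "1 < card (part_index P r ` e)"
proof (rule ccontr)
  assume "\<not> 1 < card (part_index P r ` e)"
  moreover obtain x where x: "x \<in> e" using \<open>e \<noteq> {}\<close> by blast
  ultimately have same: "part_index P r y = part_index P r x" if "y \<in> e" for y
    using that \<open>finite e\<close> by (metis card_le_Suc0_iff_eq finite_imageI image_eqI One_nat_def not_less)
  have "e \<subseteq> P (part_index P r x)"
    using part_index_mem(2)[OF assms(1)] same \<open>e \<subseteq> V\<close> by (metis subsetD subsetI)
  moreover have "part_index P r x \<in> {1..r}"
    using part_index_mem(1)[OF assms(1)] x \<open>e \<subseteq> V\<close> by blast
  ultimately show False using not_in_part by blast
qed

lemma card_part_index_image_le: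
  assumes "is_partition V r P" and "e \<subseteq> V" and "i \<in> {1..r}" and "e \<inter> P i = {}"
  shows "card (part_index P r ` e) \<le> r - 1"
proof -
  have "part_index P r ` e \<subseteq> {1..r} - {i}"
    using part_index_mem[OF assms(1)] assms(2,4) by blast
  then have "card (part_index P r ` e) \<le> card ({1..r} - {i})"
    by (intro card_mono) auto
  also have "\<dots> = r - 1" using \<open>i \<in> {1..r}\<close> by simp
  finally show ?thesis .
qed

theorem mainTheorem7:
  fixes V :: "'a set" and E :: "'a set set" and r :: nat
    and P :: "nat \<Rightarrow> 'a set" and w :: 'a
  assumes "r \<ge> 3"
    and "bi_hypergraph V E"
    and "uniform r E"
    and "is_partition V r P"
    and "\<forall>i\<in>{1..r}. independent E (P i)"
    and "P r = {w}"
    and "\<forall>e\<in>E. w \<in> e \<longrightarrow> (\<exists>i\<in>{1..r-1}. e \<inter> P i = {})"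
  shows "colorable V E"
  unfolding colorable_def proper_coloring_def
proof (intro exI ballI)
  fix e assume "e \<in> E"
  then have card_e: "card e = r" and "e \<subseteq> V"
    using assms(2,3) unfolding uniform_def bi_hypergraph_def by auto
  then have "finite e" "e \<noteq> {}" using \<open>r \<ge> 3\<close> card.infinite by fastforce+
  obtain i where "i \<in> {1..r}" "e \<inter> P i = {}"
  proof (cases "w \<in> e")
    case True
    then show ?thesis using that assms(7) \<open>e \<in> E\<close> by fastforce
  next
    case False
    then show ?thesis using that[of r] \<open>P r = {w}\<close> \<open>r \<ge> 3\<close> by auto
  qed
  then have "card (part_index P r ` e) < card e"
    using card_part_index_image_le[OF assms(4) \<open>e \<subseteq> V\<close>] card_e \<open>r \<ge> 3\<close> by fastforce
  moreover have "1 < card (part_index P r ` e)"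
    using one_less_card_part_index_image[OF assms(4) \<open>e \<subseteq> V\<close> \<open>finite e\<close> \<open>e \<noteq> {}\<close>]
      assms(5) \<open>e \<in> E\<close> unfolding independent_def by blast
  ultimately show "1 < card (part_index P r ` e) \<and> card (part_index P r ` e) < card e"
    by simp
qed

end
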